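(* Let $H,\mathsf H$ be semigroups, $\mathfrak h\colon H\to\mathsf H$ a homomorphism, $X$ an $H$-set, $S$ an order-complete ordered $\mathsf H$-set with completion $\overline S$, and $f\colon X\to\overline S$. Then: [l] $\mathrm{lE}^f_{\mathcal H_{\le}}=f$ if and only if $f\in\mathcal H_{\le}$; [u] $\mathrm{uE}_f^{\mathcal H_{\ge}}=f$ if and only if $f\in\mathcal H_{\ge}$. If in addition $\mathsf H$ is a group, the following three conditions are equivalent: (1) $f\in\overline{\mathcal H}$; (2) $\mathrm{lE}^f_{\overline{\mathcal H}}=f$; (3) $\mathrm{uE}_f^{\overline{\mathcal H}}=f$.
   Context: $X$ is an $H$-set: an action $(h,x)\mapsto hx$ with $h_1(h_2x)=(h_1h_2)x$ (and $1x=x$ if $H$ has identity $1$); similarly $S$ is an $\mathsf H$-set, with a partial order $\leqslant$ such that $s_1\leqslant s_2\Rightarrow\mathsf h s_1\leqslant\mathsf h s_2$. $S$ is order-complete: every nonempty subset bounded below (above) in $S$ has an infimum (supremum) in $S$. The completion $\overline S$ adjoins a new least element $\inf S$ if $S$ has none and a new greatest element $\sup S$ if $S$ has none; the action is extended by $\mathsf h\cdot\inf S=\inf S$, $\mathsf h\cdot\sup S=\sup S$ for the adjoined symbols; in $\overline S$, $\sup\varnothing$ is the least and $\inf\varnothing$ the greatest element. Functions $X\to\overline S$ are ordered pointwise. Classes: $\overline{\mathcal H}$ = functions $\varphi\colon X\to\overline S$ with $\varphi(hx)=\mathfrak h(h)\varphi(x)$ for all $h\in H,x\in X$; $\mathcal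 H_{\le}$ = functions $\varphi\colon X\to\overline S$ with $\varphi(hx)\leqslant\mathfrak h(h)\varphi(x)$ for all $h,x$; $\mathcal H_{\ge}$ = functions $\varphi\colon X\to\overline S$ with $\mathfrak h(h)\varphi(x)\leqslant\varphi(hx)$ for all $h,x$. For a class $\Phi$: $\mathrm{lE}^f_\Phi(x)=\sup\{\varphi(x):\varphi\in\Phi,\ \varphi\leqslant f\text{ on }X\}$ and $\mathrm{uE}_f^\Phi(x)=\inf\{\varphi(x):\varphi\in\Phi,\ f\leqslant\varphi\text{ on }X\}$, in $\overline S$. *)

theory Defs
  imports "HOL-Algebra.Group"
begin

definition semigrp :: "('a, 'b) monoid_scheme \<Rightarrow> bool" where
  "semigrp G \<longleftrightarrow>
     (\<forall>x\<in>carrier G. \<forall>y\<in>carrier G. x \<otimes>\<^bsub>G\<^esub> y \<in> carrier G) \<and>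
     (\<forall>x\<in>carrier G. \<forall>y\<in>carrier G. \<forall>z\<in>carrier G.
        (x \<otimes>\<^bsub>G\<^esub> y) \<otimes>\<^bsub>G\<^esub> z = x \<otimes>\<^bsub>G\<^esub> (y \<otimes>\<^bsub>G\<^esub> z))"

definition is_identity :: "('a, 'b) monoid_scheme \<Rightarrow> 'a \<Rightarrow> bool" where
  "is_identity G e \<longleftrightarrow> e \<in> carrier G \<and>
     (\<forall>h\<in>carrier G. e \<otimes>\<^bsub>G\<^esub> h = h \<and> h \<otimes>\<^bsub>G\<^esub> e = h)"

definition Hset :: "('h, 'b) monoid_scheme \<Rightarrow> 'x set \<Rightarrow> ('h \<Rightarrow> 'x \<Rightarrow> 'x) \<Rightarrow> bool" where
  "Hset H X act \<longleftrightarrow>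
     (\<forall>h\<in>carrier H. \<forall>x\<in>X. act h x \<in> X) \<and>
     (\<forall>h1\<in>carrier H. \<forall>h2\<in>carrier H. \<forall>x\<in>X. act h1 (act h2 x) = act (h1 \<otimes>\<^bsub>H\<^esub> h2) x) \<and>
     (\<forall>e. is_identity H e \<longrightarrow> (\<forall>x\<in>X. act e x = x))"

text \<open>The ordered set S (the whole type 's with its partial order) is an ordered
  HH-set via actS.\<close>
definition ordered_Hset :: "('g, 'b) monoid_scheme \<Rightarrow> ('g \<Rightarrow> 's::order \<Rightarrow> 's) \<Rightarrow> bool" where
  "ordered_Hset G actS \<longleftrightarrow>
     Hset G (UNIV :: 's set) actS \<and>
     (\<forall>g\<in>carrier G. \<forall>s1 s2. s1 \<le> s2 \<longrightarrow> actS g s1 \<le> actS g s2)"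

definition order_complete :: "'s::order itself \<Rightarrow> bool" where
  "order_complete _ \<longleftrightarrow>
     (\<forall>A::'s set. A \<noteq> {} \<and> (\<exists>b. \<forall>a\<in>A. b \<le> a) \<longrightarrow>
        (\<exists>m. (\<forall>a\<in>A. m \<le> a) \<and> (\<forall>b. (\<forall>a\<in>A. b \<le> a) \<longrightarrow> b \<le> m))) \<and>
     (\<forall>A::'s set. A \<noteq> {} \<and> (\<exists>b. \<forall>a\<in>A. a \<le> b) \<longrightarrow>
        (\<exists>m. (\<forall>a\<in>A. a \<le> m) \<and> (\<forall>b. (\<forall>a\<in>A. a \<le> b) \<longrightarrow> m \<le> b)))"

text \<open>Ambient type for the completion: possibly adjoined bottom / top symbols.\<close>
datatype 's ext = NegInf | Fin 's | PosInf

fun ext_le :: "'s::order ext \<Rightarrow> 's ext \<Rightarrow> bool" where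
  "ext_le NegInf _ = True"
| "ext_le (Fin a) NegInf = False"
| "ext_le (Fin a) (Fin b) = (a \<le> b)"
| "ext_le (Fin a) PosInf = True"
| "ext_le PosInf y = (y = PosInf)"

definition Sbar :: "'s::order ext set" where
  "Sbar = range Fin
     \<union> (if (\<exists>m::'s. \<forall>s. m \<le> s) then {} else {NegInf})
     \<union> (if (\<exists>m::'s. \<forall>s. s \<le> m) then {} else {PosInf})"

fun ext_act :: "('g \<Rightarrow> 's \<Rightarrow> 's) \<Rightarrow> 'g \<Rightarrow> 's ext \<Rightarrow> 's ext" where
  "ext_act actS g NegInf = NegInf"
| "ext_act actS g (Fin s) = Fin (actS g s)"
| "ext_act actS g PosInf = PosInf"

definition sup_bar :: "'s::order ext set \<Rightarrow> 's ext" where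
  "sup_bar B = (THE s. s \<in> Sbar \<and> (\<forall>b\<in>B. ext_le b s) \<and>
                        (\<forall>t\<in>Sbar. (\<forall>b\<in>B. ext_le b t) \<longrightarrow> ext_le s t))"

definition inf_bar :: "'s::order ext set \<Rightarrow> 's ext" where
  "inf_bar B = (THE s. s \<in> Sbar \<and> (\<forall>b\<in>B. ext_le s b) \<and>
                        (\<forall>t\<in>Sbar. (\<forall>b\<in>B. ext_le t b) \<longrightarrow> ext_le t s))"

definition maps_to_bar :: "'x set \<Rightarrow> ('x \<Rightarrow> 's::order ext) \<Rightarrow> bool" where
  "maps_to_bar X \<phi> \<longleftrightarrow> (\<forall>x\<in>X. \<phi> x \<in> Sbar)"

definition Hbar_class ::
  "('h, 'b) monoid_scheme \<Rightarrow> ('h \<Rightarrow> 'g) \<Rightarrow> 'x set \<Rightarrow> ('h \<Rightarrow> 'x \<Rightarrow> 'x)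
     \<Rightarrow> ('g \<Rightarrow> 's::order \<Rightarrow> 's) \<Rightarrow> ('x \<Rightarrow> 's ext) set" where
  "Hbar_class H hh X act actS = {\<phi>. maps_to_bar X \<phi> \<and>
     (\<forall>h\<in>carrier H. \<forall>x\<in>X. \<phi> (act h x) = ext_act actS (hh h) (\<phi> x))}"

definition Hle_class ::
  "('h, 'b) monoid_scheme \<Rightarrow> ('h \<Rightarrow> 'g) \<Rightarrow> 'x set \<Rightarrow> ('h \<Rightarrow> 'x \<Rightarrow> 'x)
     \<Rightarrow> ('g \<Rightarrow> 's::order \<Rightarrow> 's) \<Rightarrow> ('x \<Rightarrow> 's ext) set" where
  "Hle_class H hh X act actS = {\<phi>. maps_to_bar X \<phi> \<and>
     (\<forall>h\<in>carrier H. \<forall>x\<in>X. ext_le (\<phi> (act h x)) (ext_act actS (hh h) (\<phi> x)))}"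

definition Hge_class ::
  "('h, 'b) monoid_scheme \<Rightarrow> ('h \<Rightarrow> 'g) \<Rightarrow> 'x set \<Rightarrow> ('h \<Rightarrow> 'x \<Rightarrow> 'x)
     \<Rightarrow> ('g \<Rightarrow> 's::order \<Rightarrow> 's) \<Rightarrow> ('x \<Rightarrow> 's ext) set" where
  "Hge_class H hh X act actS = {\<phi>. maps_to_bar X \<phi> \<and>
     (\<forall>h\<in>carrier H. \<forall>x\<in>X. ext_le (ext_act actS (hh h) (\<phi> x)) (\<phi> (act h x)))}"

definition lE :: "'x set \<Rightarrow> ('x \<Rightarrow> 's::order ext) set \<Rightarrow> ('x \<Rightarrow> 's ext) \<Rightarrow> 'x \<Rightarrow> 's ext" where
  "lE X Phi f x = sup_bar {\<phi> x |\<phi>. \<phi> \<in> Phi \<and> (\<forall>y\<in>X. ext_le (\<phi> y) (f y))}"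

definition uE :: "'x set \<Rightarrow> ('x \<Rightarrow> 's::order ext) set \<Rightarrow> ('x \<Rightarrow> 's ext) \<Rightarrow> 'x \<Rightarrow> 's ext" where
  "uE X Phi f x = inf_bar {\<phi> x |\<phi>. \<phi> \<in> Phi \<and> (\<forall>y\<in>X. ext_le (f y) (\<phi> y))}"

end

theory Submission
  imports Defs
begin

text \<open>Take the lower envelope with respect to a class \<open>\<Phi>\<close>.  If \<open>f\<close> is its own envelope, then,
  by order-completeness, \<open>f x\<close> is the least upper bound in \<open>\<overline>S\<close> of the values \<open>\<phi> x\<close> of
  the minorants \<open>\<phi> \<in> \<Phi>\<close> of \<open>f\<close>; so it suffices to exhibit upper bounds.  For
  \<open>\<Phi> = \<H>\<^sub>\<le>\<close> monotonicity of the action gives \<open>\<phi>(hx) \<le> h\<phi>(x) \<le> hf(x)\<close>, hence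
  \<open>f(hx) \<le> hf(x)\<close>.  For equivariant \<open>\<phi>\<close> the same bound holds, and when the acting semigroup
  on \<open>S\<close> is a group also \<open>\<phi>(x) = h\<^sup>-\<^sup>1\<phi>(hx) \<le> h\<^sup>-\<^sup>1f(hx)\<close>, which gives the reverse
  inequality.  Upper envelopes are dual, and every member of a class is its own envelope.\<close>

lemma ext_le_refl [simp]: "ext_le a (a::'s::order ext)"
  by (cases a) auto

lemma ext_le_trans [trans]: "ext_le a b \<Longrightarrow> ext_le b c \<Longrightarrow> ext_le (a::'s::order ext) c"
  by (cases a; cases b; cases c) auto

lemma ext_le_antisym: "ext_le a b \<Longrightarrow> ext_le b a \<Longrightarrow> (a::'s::order ext) = b"
  by (cases a; cases b) auto

lemma ext_le_PosInf [simp]: "ext_le a PosInf"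
  by (cases a) auto

lemma ext_le_NegInf_iff [simp]: "ext_le a NegInf \<longleftrightarrow> a = NegInf"
  by (cases a) auto

lemma ext_PosInf_le_iff [simp]: "ext_le PosInf a \<longleftrightarrow> a = PosInf"
  by (cases a) auto

lemma Fin_in_Sbar [simp]: "Fin a \<in> Sbar"
  unfolding Sbar_def by auto

lemma NegInf_in_Sbar_iff [simp]: "NegInf \<in> (Sbar :: 's::order ext set) \<longleftrightarrow> \<not> (\<exists>m::'s. \<forall>s. m \<le> s)"
  unfolding Sbar_def by auto

lemma PosInf_in_Sbar_iff [simp]: "PosInf \<in> (Sbar :: 's::order ext set) \<longleftrightarrow> \<not> (\<exists>m::'s. \<forall>s. s \<le> m)"
  unfolding Sbar_def by auto

lemma Sbar_has_least: "\<exists>m\<in>(Sbar :: 's::order ext set). \<forall>t\<in>Sbar. ext_le m t"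
proof (cases "\<exists>m::'s. \<forall>s. m \<le> s")
  case True
  then obtain m :: 's where m: "\<forall>s. m \<le> s" by blast
  have "ext_le (Fin m) t" if "t \<in> Sbar" for t
    using that True m by (cases t) auto
  then show ?thesis by (intro bexI[of _ "Fin m"]) simp_all
next
  case False
  then show ?thesis by (intro bexI[of _ NegInf]) simp_all
qed

lemma Sbar_has_greatest: "\<exists>m\<in>(Sbar :: 's::order ext set). \<forall>t\<in>Sbar. ext_le t m"
proof (cases "\<exists>m::'s. \<forall>s. s \<le> m")
  case True
  then obtain m :: 's where m: "\<forall>s. s \<le> m" by blast
  have "ext_le t (Fin m)" if "t \<in> Sbar" for t
    using that True m by (cases t) auto
  then show ?thesis by (intro bexI[of _ "Fin m"]) simp_all
next
  case False
  then show ?thesis by (intro bexI[of _ PosInf]) simp_all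
qed

lemma order_complete_Sup:
  fixes A :: "'s::order set"
  assumes "order_complete TYPE('s)" "A \<noteq> {}" "\<forall>a\<in>A. a \<le> c"
  shows "\<exists>m. (\<forall>a\<in>A. a \<le> m) \<and> (\<forall>b. (\<forall>a\<in>A. a \<le> b) \<longrightarrow> m \<le> b)"
  using assms unfolding order_complete_def by (metis (no_types, lifting))

lemma order_complete_Inf:
  fixes A :: "'s::order set"
  assumes "order_complete TYPE('s)" "A \<noteq> {}" "\<forall>a\<in>A. c \<le> a"
  shows "\<exists>m. (\<forall>a\<in>A. m \<le> a) \<and> (\<forall>b. (\<forall>a\<in>A. b \<le> a) \<longrightarrow> b \<le> m)"
  using assms unfolding order_complete_def by (metis (no_types, lifting))

definition is_sup_bar :: "'s::order ext set \<Rightarrow> 's ext \<Rightarrow> bool" where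
  "is_sup_bar B s \<longleftrightarrow> s \<in> Sbar \<and> (\<forall>b\<in>B. ext_le b s) \<and> (\<forall>t\<in>Sbar. (\<forall>b\<in>B. ext_le b t) \<longrightarrow> ext_le s t)"

definition is_inf_bar :: "'s::order ext set \<Rightarrow> 's ext \<Rightarrow> bool" where
  "is_inf_bar B s \<longleftrightarrow> s \<in> Sbar \<and> (\<forall>b\<in>B. ext_le s b) \<and> (\<forall>t\<in>Sbar. (\<forall>b\<in>B. ext_le t b) \<longrightarrow> ext_le t s)"

lemma sup_bar_eq: "is_sup_bar B s \<Longrightarrow> sup_bar B = s"
  unfolding sup_bar_def by (rule the_equality) (auto simp: is_sup_bar_def intro: ext_le_antisym)

lemma inf_bar_eq: "is_inf_bar B s \<Longrightarrow> inf_bar B = s"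
  unfolding inf_bar_def by (rule the_equality) (auto simp: is_inf_bar_def intro: ext_le_antisym)

lemma sup_bar_exists:
  assumes oc: "order_complete TYPE('s::order)" and B: "B \<subseteq> (Sbar :: 's ext set)"
  shows "\<exists>s. is_sup_bar B s"
proof (cases "\<exists>c. \<forall>b\<in>B. ext_le b (Fin c)")
  case False
  obtain g :: "'s ext" where g: "g \<in> Sbar" "\<And>t. t \<in> Sbar \<Longrightarrow> ext_le t g"
    using Sbar_has_greatest by blast
  have "ext_le g t" if "\<forall>b\<in>B. ext_le b t" for t
  proof (cases t)
    case NegInf
    with that have "\<forall>b\<in>B. ext_le b (Fin undefined)" by auto
    with False show ?thesis by blast
  qed (use False that in auto)
  with g B have "is_sup_bar B g" unfolding is_sup_bar_def by blast
  then show ?thesis ..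
next
  case True
  then obtain c where c: "\<And>b. b \<in> B \<Longrightarrow> ext_le b (Fin c)" by blast
  define A where "A = {a. Fin a \<in> B}"
  have A_bounded: "\<forall>a\<in>A. a \<le> c"
    using c unfolding A_def by fastforce
  have B_cases: "b = NegInf \<or> (\<exists>a\<in>A. b = Fin a)" if "b \<in> B" for b
    using that c[OF that] unfolding A_def by (cases b) auto
  show ?thesis
  proof (cases "A = {}")
    case True
    obtain m :: "'s ext" where m: "m \<in> Sbar" "\<And>t. t \<in> Sbar \<Longrightarrow> ext_le m t"
      using Sbar_has_least by blast
    from True B_cases have "\<forall>b\<in>B. b = NegInf" by blast
    with m have "is_sup_bar B m" unfolding is_sup_bar_def by auto
    then show ?thesis ..
  next
    case False
    obtain m where ub: "\<forall>a\<in>A. a \<le> m" and least: "\<forall>b. (\<forall>a\<in>A. a \<le> b) \<longrightarrow> m \<le> b"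
      using order_complete_Sup[OF oc False A_bounded] by blast
    have "ext_le (Fin m) t" if "\<forall>b\<in>B. ext_le b t" for t
      using False that least unfolding A_def by (cases t) fastforce+
    moreover have "ext_le b (Fin m)" if "b \<in> B" for b
      using B_cases[OF that] ub by auto
    ultimately have "is_sup_bar B (Fin m)" unfolding is_sup_bar_def by simp
    then show ?thesis ..
  qed
qed

lemma inf_bar_exists:
  assumes oc: "order_complete TYPE('s::order)" and B: "B \<subseteq> (Sbar :: 's ext set)"
  shows "\<exists>s. is_inf_bar B s"
proof (cases "\<exists>c. \<forall>b\<in>B. ext_le (Fin c) b")
  case False
  obtain g :: "'s ext" where g: "g \<in> Sbar" "\<And>t. t \<in> Sbar \<Longrightarrow> ext_le g t"
    using Sbar_has_least by blast
  have "ext_le t g" if "\<forall>b\<in>B. ext_le t b" for t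
  proof (cases t)
    case PosInf
    with that have "\<forall>b\<in>B. ext_le (Fin undefined) b" by auto
    with False show ?thesis by blast
  qed (use False that in auto)
  with g B have "is_inf_bar B g" unfolding is_inf_bar_def by blast
  then show ?thesis ..
next
  case True
  then obtain c where c: "\<And>b. b \<in> B \<Longrightarrow> ext_le (Fin c) b" by blast
  define A where "A = {a. Fin a \<in> B}"
  have A_bounded: "\<forall>a\<in>A. c \<le> a"
    using c unfolding A_def by fastforce
  have B_cases: "b = PosInf \<or> (\<exists>a\<in>A. b = Fin a)" if "b \<in> B" for b
    using that c[OF that] unfolding A_def by (cases b) auto
  show ?thesis
  proof (cases "A = {}")
    case True
    obtain m :: "'s ext" where m: "m \<in> Sbar" "\<And>t. t \<in> Sbar \<Longrightarrow> ext_le t m"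
      using Sbar_has_greatest by blast
    from True B_cases have "\<forall>b\<in>B. b = PosInf" by blast
    with m have "is_inf_bar B m" unfolding is_inf_bar_def by auto
    then show ?thesis ..
  next
    case False
    obtain m where lb: "\<forall>a\<in>A. m \<le> a" and greatest: "\<forall>b. (\<forall>a\<in>A. b \<le> a) \<longrightarrow> b \<le> m"
      using order_complete_Inf[OF oc False A_bounded] by blast
    have "ext_le t (Fin m)" if "\<forall>b\<in>B. ext_le t b" for t
      using False that greatest unfolding A_def by (cases t) fastforce+
    moreover have "ext_le (Fin m) b" if "b \<in> B" for b
      using B_cases[OF that] lb by auto
    ultimately have "is_inf_bar B (Fin m)" unfolding is_inf_bar_def by simp
    then show ?thesis ..
  qed
qed

lemma lE_fixed_le_upper_bound:
  assumes oc: "order_complete TYPE('s::order)"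
    and Phi: "\<And>\<phi>. \<phi> \<in> Phi \<Longrightarrow> maps_to_bar X \<phi>"
    and x: "x \<in> X" and fixed: "lE X Phi f x = (f x :: 's ext)" and t: "t \<in> Sbar"
    and bound: "\<And>\<phi>. \<phi> \<in> Phi \<Longrightarrow> \<forall>y\<in>X. ext_le (\<phi> y) (f y) \<Longrightarrow> ext_le (\<phi> x) t"
  shows "ext_le (f x) t"
proof -
  let ?B = "{\<phi> x |\<phi>. \<phi> \<in> Phi \<and> (\<forall>y\<in>X. ext_le (\<phi> y) (f y))}"
  have "?B \<subseteq> Sbar"
    using Phi x unfolding maps_to_bar_def by blast
  then obtain s where s: "is_sup_bar ?B s"
    using sup_bar_exists[OF oc] by blast
  have "f x = s"
    using fixed sup_bar_eq[OF s] unfolding lE_def by simp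
  with s t bound show ?thesis
    unfolding is_sup_bar_def by blast
qed

lemma uE_fixed_ge_lower_bound:
  assumes oc: "order_complete TYPE('s::order)"
    and Phi: "\<And>\<phi>. \<phi> \<in> Phi \<Longrightarrow> maps_to_bar X \<phi>"
    and x: "x \<in> X" and fixed: "uE X Phi f x = (f x :: 's ext)" and t: "t \<in> Sbar"
    and bound: "\<And>\<phi>. \<phi> \<in> Phi \<Longrightarrow> \<forall>y\<in>X. ext_le (f y) (\<phi> y) \<Longrightarrow> ext_le t (\<phi> x)"
  shows "ext_le t (f x)"
proof -
  let ?B = "{\<phi> x |\<phi>. \<phi> \<in> Phi \<and> (\<forall>y\<in>X. ext_le (f y) (\<phi> y))}"
  have "?B \<subseteq> Sbar"
    using Phi x unfolding maps_to_bar_def by blast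
  then obtain s where s: "is_inf_bar ?B s"
    using inf_bar_exists[OF oc] by blast
  have "f x = s"
    using fixed inf_bar_eq[OF s] unfolding uE_def by simp
  with s t bound show ?thesis
    unfolding is_inf_bar_def by blast
qed

lemma lE_eq_self:
  assumes "f \<in> Phi" "\<And>\<phi>. \<phi> \<in> Phi \<Longrightarrow> maps_to_bar X \<phi>" "x \<in> X"
  shows "lE X Phi f x = f x"
  unfolding lE_def
  by (rule sup_bar_eq) (use assms in \<open>fastforce simp: is_sup_bar_def maps_to_bar_def\<close>)

lemma uE_eq_self:
  assumes "f \<in> Phi" "\<And>\<phi>. \<phi> \<in> Phi \<Longrightarrow> maps_to_bar X \<phi>" "x \<in> X"
  shows "uE X Phi f x = f x"
  unfolding uE_def
  by (rule inf_bar_eq) (use assms in \<open>fastforce simp: is_inf_bar_def maps_to_bar_def\<close>)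

lemma Hset_act_closed: "Hset H X act \<Longrightarrow> h \<in> carrier H \<Longrightarrow> x \<in> X \<Longrightarrow> act h x \<in> X"
  unfolding Hset_def by blast

lemma hom_carrier: "hh \<in> hom H HH \<Longrightarrow> h \<in> carrier H \<Longrightarrow> hh h \<in> carrier HH"
  unfolding hom_def by blast

lemma ext_act_in_Sbar: "a \<in> Sbar \<Longrightarrow> ext_act actS g a \<in> (Sbar :: 's::order ext set)"
  by (cases a) auto

lemma ext_act_mono:
  assumes "ordered_Hset G actS" "g \<in> carrier G" "ext_le a b"
  shows "ext_le (ext_act actS g a) (ext_act actS g (b :: 's::order ext))"
  using assms unfolding ordered_Hset_def by (cases a; cases b) auto

lemma ext_act_inv_cancel:
  assumes G: "group G" and os: "ordered_Hset G actS" and g: "g \<in> carrier G"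
  shows "ext_act actS (inv\<^bsub>G\<^esub> g) (ext_act actS g a) = a"
    and "ext_act actS g (ext_act actS (inv\<^bsub>G\<^esub> g) a) = a"
proof -
  have "is_identity G \<one>\<^bsub>G\<^esub>"
    using G unfolding is_identity_def by (simp add: group.is_monoid monoid.l_one monoid.r_one)
  then have one: "actS \<one>\<^bsub>G\<^esub> s = s" for s
    using os unfolding ordered_Hset_def Hset_def by blast
  have mult: "actS g1 (actS g2 s) = actS (g1 \<otimes>\<^bsub>G\<^esub> g2) s"
    if "g1 \<in> carrier G" "g2 \<in> carrier G" for g1 g2 s
    using os that unfolding ordered_Hset_def Hset_def by blast
  have "inv\<^bsub>G\<^esub> g \<in> carrier G"
    using G g by (rule group.inv_closed)
  with G g show "ext_act actS (inv\<^bsub>G\<^esub> g) (ext_act actS g a) = a"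
    and "ext_act actS g (ext_act actS (inv\<^bsub>G\<^esub> g) a) = a"
    by (cases a; simp add: mult one group.l_inv group.r_inv)+
qed

lemma Hle_class_if_lE_fixed:
  assumes hom: "hh \<in> hom H HH" and hs: "Hset H X act" and os: "ordered_Hset HH actS"
    and oc: "order_complete TYPE('s::order)" and f: "maps_to_bar X (f :: 'x \<Rightarrow> 's ext)"
    and fixed: "\<forall>x\<in>X. lE X (Hle_class H hh X act actS) f x = f x"
  shows "f \<in> Hle_class H hh X act actS"
proof -
  have "ext_le (f (act h x)) (ext_act actS (hh h) (f x))" if h: "h \<in> carrier H" and x: "x \<in> X" for h x
  proof -
    have hx: "act h x \<in> X" using hs h x by (rule Hset_act_closed)
    show ?thesis
    proof (rule lE_fixed_le_upper_bound[OF oc _ hx fixed[rule_format, OF hx]])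
      fix \<phi> assume \<phi>: "\<phi> \<in> Hle_class H hh X act actS" and le: "\<forall>y\<in>X. ext_le (\<phi> y) (f y)"
      have "ext_le (\<phi> (act h x)) (ext_act actS (hh h) (\<phi> x))"
        using \<phi> h x unfolding Hle_class_def by blast
      also have "ext_le \<dots> (ext_act actS (hh h) (f x))"
        using le x by (blast intro: ext_act_mono[OF os hom_carrier[OF hom h]])
      finally show "ext_le (\<phi> (act h x)) (ext_act actS (hh h) (f x))" .
    qed (use f x in \<open>auto simp: Hle_class_def maps_to_bar_def intro: ext_act_in_Sbar\<close>)
  qed
  with f show ?thesis unfolding Hle_class_def by blast
qed

lemma Hge_class_if_uE_fixed:
  assumes hom: "hh \<in> hom H HH" and hs: "Hset H X act" and os: "ordered_Hset HH actS"
    and oc: "order_complete TYPE('s::order)" and f: "maps_to_bar X (f :: 'x \<Rightarrow> 's ext)"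
    and fixed: "\<forall>x\<in>X. uE X (Hge_class H hh X act actS) f x = f x"
  shows "f \<in> Hge_class H hh X act actS"
proof -
  have "ext_le (ext_act actS (hh h) (f x)) (f (act h x))" if h: "h \<in> carrier H" and x: "x \<in> X" for h x
  proof -
    have hx: "act h x \<in> X" using hs h x by (rule Hset_act_closed)
    show ?thesis
    proof (rule uE_fixed_ge_lower_bound[OF oc _ hx fixed[rule_format, OF hx]])
      fix \<phi> assume \<phi>: "\<phi> \<in> Hge_class H hh X act actS" and ge: "\<forall>y\<in>X. ext_le (f y) (\<phi> y)"
      have "ext_le (ext_act actS (hh h) (f x)) (ext_act actS (hh h) (\<phi> x))"
        using ge x by (blast intro: ext_act_mono[OF os hom_carrier[OF hom h]])
      also have "ext_le \<dots> (\<phi> (act h x))"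
        using \<phi> h x unfolding Hge_class_def by blast
      finally show "ext_le (ext_act actS (hh h) (f x)) (\<phi> (act h x))" .
    qed (use f x in \<open>auto simp: Hge_class_def maps_to_bar_def intro: ext_act_in_Sbar\<close>)
  qed
  with f show ?thesis unfolding Hge_class_def by blast
qed

lemma Hbar_class_if_lE_fixed:
  assumes G: "group HH" and hom: "hh \<in> hom H HH" and hs: "Hset H X act"
    and os: "ordered_Hset HH actS" and oc: "order_complete TYPE('s::order)"
    and f: "maps_to_bar X (f :: 'x \<Rightarrow> 's ext)"
    and fixed: "\<forall>x\<in>X. lE X (Hbar_class H hh X act actS) f x = f x"
  shows "f \<in> Hbar_class H hh X act actS"
proof -
  have "f (act h x) = ext_act actS (hh h) (f x)" if h: "h \<in> carrier H" and x: "x \<in> X" for h x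
  proof -
    let ?g = "hh h" and ?g' = "inv\<^bsub>HH\<^esub> (hh h)"
    have g: "?g \<in> carrier HH" using hom h by (rule hom_carrier)
    have g': "?g' \<in> carrier HH" using G g by (rule group.inv_closed)
    have hx: "act h x \<in> X" using hs h x by (rule Hset_act_closed)
    have equi: "\<phi> (act h x) = ext_act actS ?g (\<phi> x)" if "\<phi> \<in> Hbar_class H hh X act actS" for \<phi>
      using that h x unfolding Hbar_class_def by blast
    have upper: "ext_le (f (act h x)) (ext_act actS ?g (f x))"
    proof (rule lE_fixed_le_upper_bound[OF oc _ hx fixed[rule_format, OF hx]])
      fix \<phi> assume \<phi>: "\<phi> \<in> Hbar_class H hh X act actS" and "\<forall>y\<in>X. ext_le (\<phi> y) (f y)"
      with x show "ext_le (\<phi> (act h x)) (ext_act actS ?g (f x))"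
        unfolding equi[OF \<phi>] by (blast intro: ext_act_mono[OF os g])
    qed (use f x in \<open>auto simp: Hbar_class_def maps_to_bar_def intro: ext_act_in_Sbar\<close>)
    have "ext_le (f x) (ext_act actS ?g' (f (act h x)))"
    proof (rule lE_fixed_le_upper_bound[OF oc _ x fixed[rule_format, OF x]])
      fix \<phi> assume "\<phi> \<in> Hbar_class H hh X act actS" and "\<forall>y\<in>X. ext_le (\<phi> y) (f y)"
      with hx equi ext_act_inv_cancel(1)[OF G os g, of "\<phi> x"]
      show "ext_le (\<phi> x) (ext_act actS ?g' (f (act h x)))"
        by (metis ext_act_mono[OF os g'])
    qed (use f hx in \<open>auto simp: Hbar_class_def maps_to_bar_def intro: ext_act_in_Sbar\<close>)
    then have "ext_le (ext_act actS ?g (f x)) (f (act h x))"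
      using ext_act_mono[OF os g] ext_act_inv_cancel(2)[OF G os g] by metis
    with upper show ?thesis by (rule ext_le_antisym)
  qed
  with f show ?thesis unfolding Hbar_class_def by blast
qed

lemma Hbar_class_if_uE_fixed:
  assumes G: "group HH" and hom: "hh \<in> hom H HH" and hs: "Hset H X act"
    and os: "ordered_Hset HH actS" and oc: "order_complete TYPE('s::order)"
    and f: "maps_to_bar X (f :: 'x \<Rightarrow> 's ext)"
    and fixed: "\<forall>x\<in>X. uE X (Hbar_class H hh X act actS) f x = f x"
  shows "f \<in> Hbar_class H hh X act actS"
proof -
  have "f (act h x) = ext_act actS (hh h) (f x)" if h: "h \<in> carrier H" and x: "x \<in> X" for h x
  proof -
    let ?g = "hh h" and ?g' = "inv\<^bsub>HH\<^esub> (hh h)"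
    have g: "?g \<in> carrier HH" using hom h by (rule hom_carrier)
    have g': "?g' \<in> carrier HH" using G g by (rule group.inv_closed)
    have hx: "act h x \<in> X" using hs h x by (rule Hset_act_closed)
    have equi: "\<phi> (act h x) = ext_act actS ?g (\<phi> x)" if "\<phi> \<in> Hbar_class H hh X act actS" for \<phi>
      using that h x unfolding Hbar_class_def by blast
    have lower: "ext_le (ext_act actS ?g (f x)) (f (act h x))"
    proof (rule uE_fixed_ge_lower_bound[OF oc _ hx fixed[rule_format, OF hx]])
      fix \<phi> assume \<phi>: "\<phi> \<in> Hbar_class H hh X act actS" and "\<forall>y\<in>X. ext_le (f y) (\<phi> y)"
      with x show "ext_le (ext_act actS ?g (f x)) (\<phi> (act h x))"
        unfolding equi[OF \<phi>] by (blast intro: ext_act_mono[OF os g])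
    qed (use f x in \<open>auto simp: Hbar_class_def maps_to_bar_def intro: ext_act_in_Sbar\<close>)
    have "ext_le (ext_act actS ?g' (f (act h x))) (f x)"
    proof (rule uE_fixed_ge_lower_bound[OF oc _ x fixed[rule_format, OF x]])
      fix \<phi> assume "\<phi> \<in> Hbar_class H hh X act actS" and "\<forall>y\<in>X. ext_le (f y) (\<phi> y)"
      with hx equi ext_act_inv_cancel(1)[OF G os g, of "\<phi> x"]
      show "ext_le (ext_act actS ?g' (f (act h x))) (\<phi> x)"
        by (metis ext_act_mono[OF os g'])
    qed (use f hx in \<open>auto simp: Hbar_class_def maps_to_bar_def intro: ext_act_in_Sbar\<close>)
    then have "ext_le (f (act h x)) (ext_act actS ?g (f x))"
      using ext_act_mono[OF os g] ext_act_inv_cancel(2)[OF G os g] by metis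
    with lower show ?thesis by (rule ext_le_antisym[symmetric])
  qed
  with f show ?thesis unfolding Hbar_class_def by blast
qed

theorem theorem1:
  fixes H :: "('h, 'b) monoid_scheme"
    and HH :: "('g, 'c) monoid_scheme"
    and hh :: "'h \<Rightarrow> 'g"
    and X :: "'x set"
    and act :: "'h \<Rightarrow> 'x \<Rightarrow> 'x"
    and actS :: "'g \<Rightarrow> 's::order \<Rightarrow> 's"
    and f :: "'x \<Rightarrow> 's ext"
  assumes "semigrp H" and "semigrp HH"
    and "hh \<in> hom H HH"
    and "Hset H X act"
    and "ordered_Hset HH actS"
    and "order_complete TYPE('s)"
    and "maps_to_bar X f"
  shows "((\<forall>x\<in>X. lE X (Hle_class H hh X act actS) f x = f x) \<longleftrightarrow> f \<in> Hle_class H hh X act actS)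
       \<and> ((\<forall>x\<in>X. uE X (Hge_class H hh X act actS) f x = f x) \<longleftrightarrow> f \<in> Hge_class H hh X act actS)
       \<and> (group HH \<longrightarrow>
            ((f \<in> Hbar_class H hh X act actS \<longleftrightarrow>
               (\<forall>x\<in>X. lE X (Hbar_class H hh X act actS) f x = f x))
           \<and> ((\<forall>x\<in>X. lE X (Hbar_class H hh X act actS) f x = f x) \<longleftrightarrow>
               (\<forall>x\<in>X. uE X (Hbar_class H hh X act actS) f x = f x))))"
proof -
  have maps: "\<And>\<phi>. \<phi> \<in> Hle_class H hh X act actS \<Longrightarrow> maps_to_bar X \<phi>"
    "\<And>\<phi>. \<phi> \<in> Hge_class H hh X act actS \<Longrightarrow> maps_to_bar X \<phi>"
    "\<And>\<phi>. \<phi> \<in> Hbar_class H hh X act actS \<Longrightarrow> maps_to_bar X \<phi>"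
    by (simp_all add: Hle_class_def Hge_class_def Hbar_class_def)
  note setting = assms(3-7)
  have "(\<forall>x\<in>X. lE X (Hle_class H hh X act actS) f x = f x) \<longleftrightarrow> f \<in> Hle_class H hh X act actS"
    using Hle_class_if_lE_fixed[OF setting] lE_eq_self[OF _ maps(1)] by blast
  moreover have "(\<forall>x\<in>X. uE X (Hge_class H hh X act actS) f x = f x) \<longleftrightarrow> f \<in> Hge_class H hh X act actS"
    using Hge_class_if_uE_fixed[OF setting] uE_eq_self[OF _ maps(2)] by blast
  moreover have "f \<in> Hbar_class H hh X act actS \<longleftrightarrow> (\<forall>x\<in>X. lE X (Hbar_class H hh X act actS) f x = f x)"
    and "f \<in> Hbar_class H hh X act actS \<longleftrightarrow> (\<forall>x\<in>X. uE X (Hbar_class H hh X act actS) f x = f x)"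
    if "group HH"
    using Hbar_class_if_lE_fixed[OF that setting] Hbar_class_if_uE_fixed[OF that setting]
      lE_eq_self[OF _ maps(3)] uE_eq_self[OF _ maps(3)] by blast+
  ultimately show ?thesis by blast
qed

end
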